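(* The operad morphism $\gamma:\operatorname{Arb}\to\operatorname{Zinb}$ is injective (i.e. $\gamma:\operatorname{Arb}(I)\to\operatorname{Zinb}(I)$ is injective for every finite set $I$), and so is the composite morphism $\kappa=\iota\circ\gamma:\operatorname{Arb}\to\operatorname{Mould}$.
   Context: A shrub $P$ on a finite set $I$ is a set $E$ of edges (unordered pairs of distinct elements of $I$) with a height function $h_P:I\to\mathbb{N}$; $j$ covers $i$ if $\{i,j\}\in E$ and $h_P(j)=h_P(i)+1$. Axioms: (1) edges join vertices whose heights differ by $1$; (2) every vertex of positive height covers some vertex; (3) no four distinct $a,b,c,d$ with $a$ covering $b$ and $c$, $c$ covering $d$, $\{b,d\}\notin E$; (4) no five distinct $a,b,c,d,e$ with $a$ covering $c,d$, $b$ covering $d,e$, $\{a,e\}\notin E$, $\{b,c\}\notin E$. $\operatorname{Arb}(I)$ is the set of shrubs on $I$; it is a set-theoretic operad with composition $P\circ_i P'$ = the shrub on $(I\setminus\{i\})\sqcup I'$ with height $h_P$ on $I\setminus\{i\}$, $h_{P'}+h_P(i)$ on $I'$, and edges those of $P$ not containing $i$, those of $P'$, and all $\{j,k\}$ with $j$ adjacent to $i$ in $P$ and $k$ of height $0$ in $P'$. $\operatorname{Zinb}(I)$ is the $\mathbb{Q}$-vector space with basis the total orders on $I$, with the Zinbiel operad structure (composition $\pi\circ_i\sigma$ = sum of the total orders extending $\preceq$, where $a\preceq b$ iff ($a,b\in I$, $a\le_\pi b$) or ($a,b\in I'$, $a\le_\sigma b$) or ($a\in I$, $b\in I'$, $a\le_\pi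 i$)). $\gamma:\operatorname{Arb}\to\operatorname{Zinb}$ is the operad morphism sending a shrub $P$ to the sum of all total orders $<$ on $I$ compatible with $P$, i.e. such that every vertex $i$ of positive height covers some $j$ with $j<i$. $\operatorname{Mould}(I)=\mathbb{Q}(u_i:i\in I)$ with $f\circ_i g=(\sum_{j\in J}u_j)\,g\,f|_{u_i=\sum_{j\in J}u_j}$, and $\iota:\operatorname{Zinb}\to\operatorname{Mould}$ is the (linear, injective) operad morphism sending a total order $\pi$ on $I$ to $1/\prod_{i\in I}\sum_{j\ge_\pi i}u_j$. *)

theory Defs
  imports Complex_Main "HOL-Library.Function_Algebras"
begin

definition covers :: "'a set set \<Rightarrow> ('a \<Rightarrow> nat) \<Rightarrow> 'a \<Rightarrow> 'a \<Rightarrow> bool" where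
  "covers E h j i \<longleftrightarrow> {i, j} \<in> E \<and> h j = h i + 1"

definition shrub :: "'a set \<Rightarrow> 'a set set \<Rightarrow> ('a \<Rightarrow> nat) \<Rightarrow> bool" where
  "shrub I E h \<longleftrightarrow>
     finite I \<and>
     (\<forall>e\<in>E. \<exists>a b. e = {a, b} \<and> a \<noteq> b \<and> a \<in> I \<and> b \<in> I) \<and>
     (\<forall>a b. {a, b} \<in> E \<longrightarrow> h a = h b + 1 \<or> h b = h a + 1) \<and>
     (\<forall>i\<in>I. 0 < h i \<longrightarrow> (\<exists>j\<in>I. covers E h i j)) \<and>
     \<not> (\<exists>a\<in>I. \<exists>b\<in>I. \<exists>c\<in>I. \<exists>d\<in>I. distinct [a, b, c, d] \<and>
           covers E h a b \<and> covers E h a c \<and> covers E h c d \<and> {b, d} \<notin> E) \<and>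
     \<not> (\<exists>a\<in>I. \<exists>b\<in>I. \<exists>c\<in>I. \<exists>d\<in>I. \<exists>e\<in>I. distinct [a, b, c, d, e] \<and>
           covers E h a c \<and> covers E h a d \<and> covers E h b d \<and> covers E h b e \<and>
           {a, e} \<notin> E \<and> {b, c} \<notin> E)"

text \<open>Total orders on I, represented as lists enumerating I in increasing order.\<close>

definition total_orders :: "'a set \<Rightarrow> 'a list set" where
  "total_orders I = {xs. distinct xs \<and> set xs = I}"

definition ord_le :: "'a list \<Rightarrow> 'a \<Rightarrow> 'a \<Rightarrow> bool" where
  "ord_le xs a b \<longleftrightarrow> (\<exists>p q. p \<le> q \<and> q < length xs \<and> xs ! p = a \<and> xs ! q = b)"

definition ord_less :: "'a list \<Rightarrow> 'a \<Rightarrow> 'a \<Rightarrow> bool" where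
  "ord_less xs a b \<longleftrightarrow> (\<exists>p q. p < q \<and> q < length xs \<and> xs ! p = a \<and> xs ! q = b)"

definition compatible :: "'a set \<Rightarrow> 'a set set \<Rightarrow> ('a \<Rightarrow> nat) \<Rightarrow> 'a list \<Rightarrow> bool" where
  "compatible I E h xs \<longleftrightarrow>
     (\<forall>i\<in>I. 0 < h i \<longrightarrow> (\<exists>j\<in>I. covers E h i j \<and> ord_less xs j i))"

text \<open>Elements of Zinb(I): Q-linear combinations of total orders on I, as coefficient
  functions (the basis vector of a total order is its indicator).\<close>

type_synonym 'a zinb = "'a list \<Rightarrow> rat"

definition basis_vec :: "'a list \<Rightarrow> 'a zinb" where
  "basis_vec xs = (\<lambda>ys. if ys = xs then 1 else 0)"

definition gamma :: "'a set \<Rightarrow> 'a set set \<Rightarrow> ('a \<Rightarrow> nat) \<Rightarrow> 'a zinb" where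
  "gamma I E h = (\<Sum>xs\<in>{xs\<in>total_orders I. compatible I E h xs}. basis_vec xs)"

text \<open>Elements of Mould(I) = Q(u_i : i in I): a rational function is represented by its
  values at points u with all coordinates positive (where all the denominators below
  are nonzero); two rational functions are equal iff they agree on these points.\<close>

definition iota_basis :: "'a set \<Rightarrow> 'a list \<Rightarrow> ('a \<Rightarrow> rat) \<Rightarrow> rat" where
  "iota_basis I xs u = 1 / (\<Prod>i\<in>I. \<Sum>j\<in>{j\<in>I. ord_le xs i j}. u j)"

definition iota :: "'a set \<Rightarrow> 'a zinb \<Rightarrow> ('a \<Rightarrow> rat) \<Rightarrow> rat" where
  "iota I z u = (\<Sum>xs\<in>total_orders I. z xs * iota_basis I xs u)"

definition kappa :: "'a set \<Rightarrow> 'a set set \<Rightarrow> ('a \<Rightarrow> nat) \<Rightarrow> ('a \<Rightarrow> rat) \<Rightarrow> rat" where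
  "kappa I E h = iota I (gamma I E h)"

end

theory Submission
  imports Defs
begin

text \<open>
  The compatible total orders remember the shrub. A vertex \<open>j\<close> sits at position at least
  \<open>h j\<close> in every compatible order, and a chain of covers down to height 0 shows that position
  \<open>h j\<close> is attained; so the heights are the least positions. If \<open>x\<close> covers \<open>y\<close>, some
  compatible order puts \<open>y\<close> at position \<open>h y\<close> and \<open>x\<close> right after it, and there \<open>x\<close> can only
  cover \<open>y\<close>; so the edges are determined too, and \<open>\<gamma>\<close> is injective.

  For \<open>\<kappa> = \<iota> \<circ> \<gamma>\<close> it remains to see that the rational functions \<open>\<iota>(\<pi>)\<close> are linearly
  independent. Multiply a vanishing combination by \<open>u\<^sub>b\<close> and let \<open>u\<^sub>b \<rightarrow> 0\<close>: the orders not
  ending in \<open>b\<close> drop out, and an order \<open>\<pi> b\<close> contributes \<open>\<iota>(\<pi>)\<close> on \<open>I - {b}\<close>. Induction on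
  the size of \<open>I\<close> then kills every coefficient.
\<close>

section \<open>Compatible orders determine the shrub\<close>

definition compatible_seq :: "'a set set \<Rightarrow> ('a \<Rightarrow> nat) \<Rightarrow> 'a list \<Rightarrow> bool" where
  "compatible_seq E h xs \<longleftrightarrow>
     (\<forall>q<length xs. 0 < h (xs ! q) \<longrightarrow> (\<exists>p<q. covers E h (xs ! q) (xs ! p)))"

lemma compatible_seq_snoc:
  "compatible_seq E h (xs @ [x]) \<longleftrightarrow>
     compatible_seq E h xs \<and> (0 < h x \<longrightarrow> (\<exists>y\<in>set xs. covers E h x y))"
proof -
  have "(\<exists>p<length xs. covers E h x ((xs @ [x]) ! p)) \<longleftrightarrow> (\<exists>y\<in>set xs. covers E h x y)"
    by (metis in_set_conv_nth nth_append_left)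
  then show ?thesis
    unfolding compatible_seq_def length_append_singleton All_less_Suc nth_append_length
    by (simp add: nth_append_left cong: conj_cong) blast
qed

lemma compatible_seq_height_le:
  assumes "compatible_seq E h xs" and "q < length xs"
  shows "h (xs ! q) \<le> q"
  using assms(2)
proof (induction q rule: less_induct)
  case (less q)
  show ?case
  proof (cases "h (xs ! q) = 0")
    case False
    then obtain p where "p < q" "covers E h (xs ! q) (xs ! p)"
      using assms(1) less.prems unfolding compatible_seq_def by blast
    with less.IH[of p] less.prems show ?thesis by (simp add: covers_def)
  qed simp
qed

lemma compatible_seq_height_less_length:
  assumes "compatible_seq E h xs" and "x \<in> set xs"
  shows "h x < length xs"
proof -
  obtain q where "q < length xs" "xs ! q = x"
    using assms(2) by (auto simp: in_set_conv_nth)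
  with compatible_seq_height_le[OF assms(1)] show ?thesis by fastforce
qed

lemma ord_less_nth_iff:
  assumes "distinct xs" and "q < length xs"
  shows "ord_less xs j (xs ! q) \<longleftrightarrow> (\<exists>p<q. xs ! p = j)"
proof
  assume "ord_less xs j (xs ! q)"
  then obtain p q' where "p < q'" "q' < length xs" "xs ! p = j" "xs ! q' = xs ! q"
    unfolding ord_less_def by blast
  moreover from calculation have "q' = q"
    using assms nth_eq_iff_index_eq by blast
  ultimately show "\<exists>p<q. xs ! p = j" by blast
next
  assume "\<exists>p<q. xs ! p = j"
  with assms(2) show "ord_less xs j (xs ! q)"
    unfolding ord_less_def by blast
qed

lemma compatible_iff_compatible_seq:
  assumes "xs \<in> total_orders I"
  shows "compatible I E h xs \<longleftrightarrow> compatible_seq E h xs"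
proof -
  have xs: "distinct xs" "set xs = I" using assms by (auto simp: total_orders_def)
  have "(\<exists>j\<in>set xs. covers E h (xs ! q) j \<and> ord_less xs j (xs ! q)) \<longleftrightarrow>
      (\<exists>p<q. covers E h (xs ! q) (xs ! p))" if "q < length xs" for q
    using that xs(1) ord_less_nth_iff[OF xs(1) that] by (auto intro: order.strict_trans)
  then show ?thesis
    unfolding compatible_def compatible_seq_def xs(2)[symmetric] by (simp add: all_set_conv_all_nth)
qed

lemma shrub_edge_covers:
  assumes "shrub I E h" and "e \<in> E"
  shows "\<exists>x y. x \<in> I \<and> y \<in> I \<and> e = {y, x} \<and> covers E h x y"
proof -
  have "\<forall>e\<in>E. \<exists>a b. e = {a, b} \<and> a \<noteq> b \<and> a \<in> I \<and> b \<in> I"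
    and heights: "\<forall>a b. {a, b} \<in> E \<longrightarrow> h a = h b + 1 \<or> h b = h a + 1"
    using assms(1) by (simp_all add: shrub_def)
  then obtain a b where ab: "e = {a, b}" "a \<in> I" "b \<in> I" using assms(2) by meson
  then have "h a = h b + 1 \<or> h b = h a + 1" using assms(2) heights by blast
  then show ?thesis
  proof
    assume "h a = h b + 1"
    with ab assms(2) show ?thesis
      unfolding covers_def by (intro exI[of _ a] exI[of _ b]) (simp add: insert_commute)
  next
    assume "h b = h a + 1"
    with ab assms(2) show ?thesis
      unfolding covers_def by (intro exI[of _ b] exI[of _ a]) simp
  qed
qed

lemma shrub_covers_lower:
  "shrub I E h \<Longrightarrow> i \<in> I \<Longrightarrow> 0 < h i \<Longrightarrow> \<exists>j\<in>I. covers E h i j"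
  by (simp add: shrub_def)

lemma shrub_extend_compatible_seq:
  assumes shrub: "shrub I E h"
  shows "distinct xs \<Longrightarrow> set xs \<subseteq> I \<Longrightarrow> compatible_seq E h xs \<Longrightarrow>
    \<exists>ys. xs @ ys \<in> total_orders I \<and> compatible_seq E h (xs @ ys)"
proof (induction "card (I - set xs)" arbitrary: xs rule: less_induct)
  case less
  have fin: "finite I" using shrub by (simp add: shrub_def)
  show ?case
  proof (cases "I \<subseteq> set xs")
    case True
    with less.prems show ?thesis
      by (intro exI[of _ "[]"]) (auto simp: total_orders_def)
  next
    case False
    \<comment> \<open>A lowest unplaced vertex can be appended: whatever it covers is lower, hence already placed.\<close>
    define x where "x = arg_min_on h (I - set xs)"
    have x: "x \<in> I - set xs" "\<forall>z\<in>I - set xs. h x \<le> h z"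
    proof -
      have rest: "finite (I - set xs)" "I - set xs \<noteq> {}" using False fin by auto
      show "x \<in> I - set xs"
        unfolding x_def by (rule arg_min_if_finite(1)[OF rest])
      show "\<forall>z\<in>I - set xs. h x \<le> h z"
        unfolding x_def using arg_min_least[OF rest] by blast
    qed
    have compat: "compatible_seq E h (xs @ [x])"
      unfolding compatible_seq_snoc
    proof (intro conjI impI)
      assume "0 < h x"
      then obtain j where j: "j \<in> I" "covers E h x j"
        using shrub_covers_lower[OF shrub] x(1) by blast
      then have "j \<in> set xs"
        using x(2) by (force simp: covers_def)
      with j show "\<exists>y\<in>set xs. covers E h x y" by blast
    qed (rule less.prems(3))
    have "card (I - set (xs @ [x])) < card (I - set xs)"
      using x fin by (intro psubset_card_mono) auto
    moreover have "distinct (xs @ [x])" "set (xs @ [x]) \<subseteq> I"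
      using less.prems x by auto
    ultimately obtain ys where "(xs @ [x]) @ ys \<in> total_orders I" "compatible_seq E h ((xs @ [x]) @ ys)"
      using less.hyps compat by blast
    then show ?thesis by (intro exI[of _ "x # ys"]) auto
  qed
qed

lemma shrub_compatible_chain:
  assumes shrub: "shrub I E h"
  shows "j \<in> I \<Longrightarrow>
    \<exists>c. distinct c \<and> set c \<subseteq> I \<and> compatible_seq E h c \<and> length c = Suc (h j) \<and> c ! h j = j"
proof (induction "h j" arbitrary: j)
  case 0
  then show ?case by (intro exI[of _ "[j]"]) (auto simp: compatible_seq_def)
next
  case (Suc n)
  then obtain k where k: "k \<in> I" "covers E h j k"
    using shrub_covers_lower[OF shrub] by force
  then have "h k = n" using Suc.hyps(2) by (simp add: covers_def)
  then obtain c where c: "distinct c" "set c \<subseteq> I" "compatible_seq E h c" "length c = Suc n" "c ! n = k"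
    using Suc.hyps(1) k(1) by blast
  have "j \<notin> set c"
    using compatible_seq_height_less_length[OF c(3)] c(4) Suc.hyps(2) by fastforce
  moreover have "compatible_seq E h (c @ [j])"
    unfolding compatible_seq_snoc using c k by (metis lessI nth_mem)
  ultimately show ?case
    using c Suc by (intro exI[of _ "c @ [j]"]) (auto simp: nth_append)
qed

lemma compatible_orders_height_le:
  assumes shrub: "shrub I E h" and x: "x \<in> I"
    and compat: "\<forall>xs\<in>total_orders I. compatible I E h xs \<longrightarrow> compatible I E' h' xs"
  shows "h' x \<le> h x"
proof -
  obtain c where c: "distinct c" "set c \<subseteq> I" "compatible_seq E h c" "length c = Suc (h x)" "c ! h x = x"
    using shrub_compatible_chain[OF shrub x] by blast
  then obtain ys where ys: "c @ ys \<in> total_orders I" "compatible_seq E h (c @ ys)"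
    using shrub_extend_compatible_seq[OF shrub] by blast
  then have "compatible_seq E' h' (c @ ys)"
    using compat compatible_iff_compatible_seq by blast
  then have "h' ((c @ ys) ! h x) \<le> h x"
    using c(4) by (intro compatible_seq_height_le) auto
  with c(4,5) show ?thesis by (simp add: nth_append)
qed

lemma compatible_orders_edges_subset:
  assumes shrub: "shrub I E h" and heights: "\<forall>i\<in>I. h i = h' i"
    and compat: "\<forall>xs\<in>total_orders I. compatible I E h xs \<longrightarrow> compatible I E' h' xs"
  shows "E \<subseteq> E'"
proof
  fix e assume "e \<in> E"
  then obtain x y where xy: "x \<in> I" "y \<in> I" and e: "e = {y, x}" and cov: "covers E h x y"
    using shrub_edge_covers[OF shrub] by blast
  obtain c where c: "distinct c" "set c \<subseteq> I" "compatible_seq E h c" "length c = Suc (h y)" "c ! h y = y"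
    using shrub_compatible_chain[OF shrub xy(2)] by blast
  have "x \<notin> set c"
    using compatible_seq_height_less_length[OF c(3)] c(4) cov by (fastforce simp: covers_def)
  moreover have "compatible_seq E h (c @ [x])"
    unfolding compatible_seq_snoc using c cov by (metis lessI nth_mem)
  ultimately obtain ys where ys: "c @ [x] @ ys \<in> total_orders I" "compatible_seq E h (c @ [x] @ ys)"
    using shrub_extend_compatible_seq[OF shrub, of "c @ [x]"] c xy by auto
  define zs where "zs = c @ [x] @ ys"
  have zs: "zs ! h y = y" "zs ! Suc (h y) = x" "Suc (h y) < length zs"
    using c(4,5) by (auto simp: zs_def nth_append)
  have compat': "compatible_seq E' h' zs"
    using compat ys compatible_iff_compatible_seq unfolding zs_def by blast
  \<comment> \<open>Nothing of height \<open>h y\<close> can stand before position \<open>h y\<close>, so \<open>x\<close> must cover \<open>y\<close> in \<open>E'\<close>.\<close>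
  have "0 < h' x" using heights xy cov by (simp add: covers_def)
  then obtain p where p: "p < Suc (h y)" "covers E' h' x (zs ! p)"
    using compat' zs unfolding compatible_seq_def by metis
  have "h' (zs ! p) = h y"
    using p(2) heights xy cov by (simp add: covers_def)
  moreover have "h' (zs ! p) \<le> p"
    using compatible_seq_height_le[OF compat'] p(1) zs(3) by simp
  ultimately have "p = h y" using p(1) by simp
  with p(2) zs e show "e \<in> E'" by (simp add: covers_def)
qed

lemma shrub_eq_if_same_compatible_orders:
  assumes "shrub I E h" and "shrub I E' h'"
    and "\<forall>xs\<in>total_orders I. compatible I E h xs \<longleftrightarrow> compatible I E' h' xs"
  shows "E = E' \<and> (\<forall>i\<in>I. h i = h' i)"
proof -
  have heights: "\<forall>i\<in>I. h i = h' i"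
    using assms compatible_orders_height_le by (metis antisym)
  then have "E \<subseteq> E'" "E' \<subseteq> E"
    using assms compatible_orders_edges_subset by metis+
  with heights show ?thesis by blast
qed

lemma finite_total_orders: "finite I \<Longrightarrow> finite (total_orders I)"
  unfolding total_orders_def by (rule finite_subset[OF _ finite_subset_distinct]) auto

lemma sum_apply: "(\<Sum>a\<in>A. f a) x = (\<Sum>a\<in>A. f a x)"
  by (induction A rule: infinite_finite_induct) auto

lemma gamma_apply:
  assumes "finite I"
  shows "gamma I E h xs = (if xs \<in> total_orders I \<and> compatible I E h xs then 1 else 0)"
  unfolding gamma_def sum_apply basis_vec_def
  using finite_total_orders[OF assms] by (simp add: sum.delta)

lemma gamma_eq_imp_eq:
  assumes "shrub I E h" and "shrub I E' h'" and "gamma I E h = gamma I E' h'"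
  shows "E = E' \<and> (\<forall>i\<in>I. h i = h' i)"
proof (rule shrub_eq_if_same_compatible_orders[OF assms(1,2)], intro ballI)
  fix xs assume "xs \<in> total_orders I"
  moreover have "finite I" using assms(1) by (simp add: shrub_def)
  ultimately show "compatible I E h xs \<longleftrightarrow> compatible I E' h' xs"
    using fun_cong[OF assms(3), of xs] gamma_apply by (metis zero_neq_one)
qed

section \<open>Linear independence of the rational functions \<open>\<iota>(\<pi>)\<close>\<close>

lemma ord_le_in_set: "ord_le xs i j \<Longrightarrow> i \<in> set xs"
  unfolding ord_le_def by auto

lemma ord_le_last:
  assumes "i \<in> set xs"
  shows "ord_le xs i (last xs)"
proof -
  obtain p where p: "p < length xs" "xs ! p = i"
    using assms by (auto simp: in_set_conv_nth)
  then have "xs \<noteq> []" by auto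
  then have "last xs = xs ! (length xs - 1)"
    by (simp add: last_conv_nth)
  with p show ?thesis
    unfolding ord_le_def by (intro exI[of _ p] exI[of _ "length xs - 1"]) auto
qed

lemma ord_le_snoc_iff:
  assumes "i \<in> set (xs @ [b])"
  shows "ord_le (xs @ [b]) i j \<longleftrightarrow> j = b \<or> ord_le xs i j"
proof
  assume "ord_le (xs @ [b]) i j"
  then obtain p q where pq: "p \<le> q" "q \<le> length xs" "(xs @ [b]) ! p = i" "(xs @ [b]) ! q = j"
    unfolding ord_le_def by auto
  show "j = b \<or> ord_le xs i j"
  proof (cases "q = length xs")
    case False
    with pq show ?thesis
      unfolding ord_le_def by (intro disjI2 exI[of _ p] exI[of _ q]) (auto simp: nth_append)
  qed (use pq in simp)
next
  assume "j = b \<or> ord_le xs i j"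
  then show "ord_le (xs @ [b]) i j"
  proof
    assume "j = b"
    obtain p where "p < Suc (length xs)" "(xs @ [b]) ! p = i"
      using assms by (metis in_set_conv_nth length_append_singleton)
    with \<open>j = b\<close> show ?thesis unfolding ord_le_def
      by (intro exI[of _ p] exI[of _ "length xs"]) auto
  next
    assume "ord_le xs i j"
    then obtain p q where "p \<le> q" "q < length xs" "xs ! p = i" "xs ! q = j"
      unfolding ord_le_def by blast
    then show ?thesis unfolding ord_le_def
      by (intro exI[of _ p] exI[of _ q]) (auto simp: nth_append)
  qed
qed

lemma snoc_in_total_orders_iff:
  "b \<in> I \<Longrightarrow> ys @ [b] \<in> total_orders I \<longleftrightarrow> ys \<in> total_orders (I - {b})"
  unfolding total_orders_def by auto

lemma total_orders_last_eq:
  assumes "b \<in> I"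
  shows "{xs \<in> total_orders I. last xs = b} = (\<lambda>ys. ys @ [b]) ` total_orders (I - {b})"
proof -
  have "xs \<in> (\<lambda>ys. ys @ [b]) ` total_orders (I - {b})"
    if "xs \<in> total_orders I" "last xs = b" for xs
  proof -
    have "xs \<noteq> []" using that assms by (auto simp: total_orders_def)
    with that have "xs = butlast xs @ [b]" by (metis append_butlast_last_id)
    with that snoc_in_total_orders_iff[OF assms, of "butlast xs"] show ?thesis
      by (intro image_eqI[of xs _ "butlast xs"]) auto
  qed
  then show ?thesis using snoc_in_total_orders_iff[OF assms] by auto
qed

text \<open>The denominator of \<open>iota_basis\<close>, over the reals so that one variable can be sent to 0.\<close>

definition suffix_sum_prod :: "'a set \<Rightarrow> 'a list \<Rightarrow> ('a \<Rightarrow> real) \<Rightarrow> real" where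
  "suffix_sum_prod I xs v = (\<Prod>i\<in>I. \<Sum>j\<in>{j\<in>I. ord_le xs i j}. v j)"

lemma of_rat_iota_basis:
  "of_rat (iota_basis I xs u) = 1 / suffix_sum_prod I xs (\<lambda>j. of_rat (u j))"
  by (simp add: iota_basis_def suffix_sum_prod_def of_rat_divide of_rat_prod of_rat_sum)

lemma suffix_sum_prod_pos:
  assumes xs: "xs \<in> total_orders I" and "\<forall>j\<in>I. 0 \<le> v j" and "xs \<noteq> [] \<Longrightarrow> 0 < v (last xs)"
  shows "0 < suffix_sum_prod I xs v"
  unfolding suffix_sum_prod_def
proof (rule prod_pos)
  fix i assume i: "i \<in> I"
  have I: "finite I" "set xs = I" using xs by (auto simp: total_orders_def)
  then have ne: "xs \<noteq> []" using i by auto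
  then have "last xs \<in> {j\<in>I. ord_le xs i j}"
    using I i ord_le_last[of i xs] by auto
  with assms(2,3) I ne show "0 < (\<Sum>j\<in>{j\<in>I. ord_le xs i j}. v j)"
    by (intro sum_pos2[of _ "last xs"]) auto
qed

lemma suffix_sum_prod_snoc:
  assumes "ys @ [b] \<in> total_orders I"
  shows "suffix_sum_prod I (ys @ [b]) v
           = v b * (\<Prod>i\<in>I - {b}. v b + (\<Sum>j\<in>{j\<in>I - {b}. ord_le ys i j}. v j))"
proof -
  have I: "finite I" "b \<in> I" "b \<notin> set ys" "set ys = I - {b}"
    using assms by (auto simp: total_orders_def)
  have "{j\<in>I. ord_le (ys @ [b]) b j} = {b}"
    using I ord_le_snoc_iff[of b ys b] ord_le_in_set[of ys b] by auto
  moreover have "{j\<in>I. ord_le (ys @ [b]) i j} = insert b {j\<in>I - {b}. ord_le ys i j}"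
    if "i \<in> I - {b}" for i
    using that I ord_le_snoc_iff[of i ys b] by auto
  ultimately show ?thesis
    unfolding suffix_sum_prod_def using I by (simp add: prod.remove[of I b])
qed

lemma isCont_suffix_sum_prod_upd: "isCont (\<lambda>t. suffix_sum_prod I xs (v(b := t))) x"
proof -
  have "isCont (\<lambda>t. (v(b := t)) j) x" for j
    by (cases "j = b") auto
  then show ?thesis
    unfolding suffix_sum_prod_def by (intro continuous_intros)
qed

lemma scaled_inverse_suffix_sum_prod_tendsto:
  assumes xs: "xs \<in> total_orders I" and b: "b \<in> I" and w: "\<forall>j\<in>I - {b}. 0 < w j"
  shows "((\<lambda>t. t / suffix_sum_prod I xs (w(b := t))) \<longlongrightarrow>
           (if last xs = b then 1 / suffix_sum_prod (I - {b}) (butlast xs) w else 0)) (at 0)"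
proof (cases "last xs = b")
  case False
  have I: "set xs = I" "xs \<noteq> []" using xs b by (auto simp: total_orders_def)
  have "0 < suffix_sum_prod I xs (w(b := 0))"
    using I False w by (intro suffix_sum_prod_pos[OF xs]) (auto simp: less_imp_le)
  with isCont_suffix_sum_prod_upd[of 0 I xs w b]
  have "((\<lambda>t. t / suffix_sum_prod I xs (w(b := t))) \<longlongrightarrow> 0 / suffix_sum_prod I xs (w(b := 0))) (at 0)"
    by (intro tendsto_intros) (auto simp: isCont_def)
  with False show ?thesis by simp
next
  case True
  obtain ys where ys: "xs = ys @ [b]" "ys \<in> total_orders (I - {b})"
    using xs b True total_orders_last_eq[OF b] by auto
  define Q where "Q t = (\<Prod>i\<in>I - {b}. t + (\<Sum>j\<in>{j\<in>I - {b}. ord_le ys i j}. w j))" for t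
  have factor: "suffix_sum_prod I xs (w(b := t)) = t * Q t" for t
    unfolding ys(1) suffix_sum_prod_snoc[OF xs[unfolded ys(1)]] Q_def
    by (auto intro!: prod.cong sum.cong)
  have Q0: "Q 0 = suffix_sum_prod (I - {b}) ys w"
    unfolding Q_def suffix_sum_prod_def by simp
  have "\<forall>\<^sub>F t in at 0. t / suffix_sum_prod I xs (w(b := t)) = 1 / Q t"
    using eventually_neq_at_within[of 0 0 UNIV] by eventually_elim (simp add: factor)
  moreover have "0 < Q 0"
    unfolding Q0 using ys(2) w by (intro suffix_sum_prod_pos[OF ys(2)]) (auto simp: total_orders_def less_imp_le)
  moreover have "isCont Q 0"
    unfolding Q_def by (intro continuous_intros)
  ultimately have "((\<lambda>t. t / suffix_sum_prod I xs (w(b := t))) \<longlongrightarrow> 1 / Q 0) (at 0)"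
    by (simp add: tendsto_cong isCont_def tendsto_divide)
  with True ys(1) Q0 show ?thesis by simp
qed

lemma scaled_combination_tendsto:
  fixes c :: "'a list \<Rightarrow> real"
  assumes I: "finite I" "b \<in> I" and w: "\<forall>j\<in>I - {b}. 0 < w j"
  shows "((\<lambda>t. \<Sum>xs\<in>total_orders I. c xs * (t / suffix_sum_prod I xs (w(b := t)))) \<longlongrightarrow>
           (\<Sum>ys\<in>total_orders (I - {b}). c (ys @ [b]) / suffix_sum_prod (I - {b}) ys w)) (at 0)"
proof -
  have lim: "((\<lambda>t. \<Sum>xs\<in>total_orders I. c xs * (t / suffix_sum_prod I xs (w(b := t)))) \<longlongrightarrow>
         (\<Sum>xs\<in>total_orders I. c xs *
            (if last xs = b then 1 / suffix_sum_prod (I - {b}) (butlast xs) w else 0))) (at 0)"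
    (is "(_ \<longlongrightarrow> ?M) _")
    using I w by (intro tendsto_sum tendsto_mult_left scaled_inverse_suffix_sum_prod_tendsto) auto
  have "(\<Sum>xs\<in>total_orders I. c xs *
          (if last xs = b then 1 / suffix_sum_prod (I - {b}) (butlast xs) w else 0))
        = (\<Sum>xs\<in>{xs \<in> total_orders I. last xs = b}. c xs / suffix_sum_prod (I - {b}) (butlast xs) w)"
    using finite_total_orders[OF I(1)] by (auto simp: sum.inter_filter intro!: sum.cong)
  also have "\<dots> = (\<Sum>ys\<in>total_orders (I - {b}). c (ys @ [b]) / suffix_sum_prod (I - {b}) ys w)"
    unfolding total_orders_last_eq[OF I(2)] by (simp add: sum.reindex inj_on_def)
  finally have "?M = (\<Sum>ys\<in>total_orders (I - {b}). c (ys @ [b]) / suffix_sum_prod (I - {b}) ys w)" .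
  with lim show ?thesis by simp
qed

lemma iota_basis_combination_drop_last:
  fixes c :: "'a list \<Rightarrow> rat"
  assumes I: "finite I" "b \<in> I"
    and c: "\<forall>u. (\<forall>i\<in>I. 0 < u i) \<longrightarrow> (\<Sum>xs\<in>total_orders I. c xs * iota_basis I xs u) = 0"
    and u: "\<forall>i\<in>I - {b}. 0 < u i"
  shows "(\<Sum>ys\<in>total_orders (I - {b}). c (ys @ [b]) * iota_basis (I - {b}) ys u) = 0"
    (is "?L = 0")
proof -
  define w :: "'a \<Rightarrow> real" where "w = (\<lambda>j. of_rat (u j))"
  define f where "f t = (\<Sum>xs\<in>total_orders I. of_rat (c xs) * (t / suffix_sum_prod I xs (w(b := t))))"
    for t
  have L: "of_rat ?L = (\<Sum>ys\<in>total_orders (I - {b}). of_rat (c (ys @ [b])) / suffix_sum_prod (I - {b}) ys w)"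
    unfolding w_def by (simp add: of_rat_sum of_rat_mult of_rat_iota_basis)
  have "\<forall>j\<in>I - {b}. 0 < w j" using u by (simp add: w_def)
  then have lim: "(f \<longlongrightarrow> of_rat ?L) (at 0)"
    unfolding f_def L by (rule scaled_combination_tendsto[OF I])
  \<comment> \<open>The hypothesis only covers rational points, so approach \<open>0\<close> along \<open>1 / (n + 1)\<close>.\<close>
  define r where "r n = 1 / (of_nat (Suc n) :: rat)" for n
  have "filterlim (\<lambda>n. of_rat (r n) :: real) (at 0) sequentially"
    unfolding filterlim_at r_def using LIMSEQ_inverse_real_of_nat
    by (simp add: of_rat_divide of_rat_add inverse_eq_divide)
  with lim have "(\<lambda>n. f (of_rat (r n))) \<longlonglongrightarrow> of_rat ?L"
    by (rule filterlim_compose)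
  moreover have "f (of_rat (r n)) = 0" for n
  proof -
    have "w(b := of_rat (r n)) = (\<lambda>j. of_rat ((u(b := r n)) j))"
      by (simp add: w_def fun_eq_iff)
    then have "f (of_rat (r n)) =
        of_rat (r n) * of_rat (\<Sum>xs\<in>total_orders I. c xs * iota_basis I xs (u(b := r n)))"
      unfolding f_def by (simp add: of_rat_iota_basis sum_distrib_left of_rat_sum of_rat_mult mult_ac)
    also have "(\<Sum>xs\<in>total_orders I. c xs * iota_basis I xs (u(b := r n))) = 0"
      using c u by (simp add: r_def)
    finally show ?thesis by simp
  qed
  ultimately have "of_rat ?L = (0 :: real)"
    by (simp add: LIMSEQ_const_iff)
  then show ?thesis by simp
qed

lemma iota_basis_linear_independent:
  fixes c :: "'a list \<Rightarrow> rat"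
  assumes "finite I"
    and "\<forall>u. (\<forall>i\<in>I. 0 < u i) \<longrightarrow> (\<Sum>xs\<in>total_orders I. c xs * iota_basis I xs u) = 0"
    and "xs \<in> total_orders I"
  shows "c xs = 0"
  using assms
proof (induction "card I" arbitrary: I c xs rule: less_induct)
  case less
  show ?case
  proof (cases "I = {}")
    case True
    then have "total_orders I = {[]}" "xs = []"
      using less.prems(3) by (auto simp: total_orders_def)
    moreover have "iota_basis I [] (\<lambda>_. 1) = 1"
      using True by (simp add: iota_basis_def)
    ultimately show ?thesis
      using less.prems(2) by auto
  next
    case False
    then have "xs \<noteq> []" using less.prems(3) by (auto simp: total_orders_def)
    then obtain ys b where xs: "xs = ys @ [b]" by (metis append_butlast_last_id)
    then have b: "b \<in> I" and ys: "ys \<in> total_orders (I - {b})"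
      using less.prems(3) snoc_in_total_orders_iff[of b I ys] by (auto simp: total_orders_def)
    have "card (I - {b}) < card I"
      using less.prems(1) b by (rule card_Diff1_less)
    moreover have "\<forall>u. (\<forall>i\<in>I - {b}. 0 < u i) \<longrightarrow>
        (\<Sum>ys\<in>total_orders (I - {b}). c (ys @ [b]) * iota_basis (I - {b}) ys u) = 0"
      using iota_basis_combination_drop_last[OF less.prems(1) b less.prems(2)] by blast
    ultimately have "c (ys @ [b]) = 0"
      using less.hyps[of "I - {b}" "\<lambda>ys. c (ys @ [b])"] less.prems(1) ys by blast
    then show ?thesis using xs by simp
  qed
qed

lemma iota_eq_imp_eq:
  assumes "finite I"
    and "\<forall>xs. xs \<notin> total_orders I \<longrightarrow> z xs = 0" "\<forall>xs. xs \<notin> total_orders I \<longrightarrow> z' xs = 0"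
    and "\<forall>u. (\<forall>i\<in>I. 0 < u i) \<longrightarrow> iota I z u = iota I z' u"
  shows "z = z'"
proof
  fix xs
  have "\<forall>u. (\<forall>i\<in>I. 0 < u i) \<longrightarrow>
      (\<Sum>xs\<in>total_orders I. (z xs - z' xs) * iota_basis I xs u) = 0"
    using assms(4) by (simp add: iota_def left_diff_distrib sum_subtractf)
  then show "z xs = z' xs"
    using assms iota_basis_linear_independent[of I "\<lambda>xs. z xs - z' xs" xs]
    by (cases "xs \<in> total_orders I") auto
qed

theorem mainTheorem15:
  assumes "shrub I E h" and "shrub I E' h'"
  shows "(gamma I E h = gamma I E' h' \<longrightarrow> E = E' \<and> (\<forall>i\<in>I. h i = h' i))
       \<and> ((\<forall>u. (\<forall>i\<in>I. 0 < u i) \<longrightarrow> kappa I E h u = kappa I E' h' u)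
            \<longrightarrow> E = E' \<and> (\<forall>i\<in>I. h i = h' i))"
proof (rule conjI; rule impI)
  assume "gamma I E h = gamma I E' h'"
  then show "E = E' \<and> (\<forall>i\<in>I. h i = h' i)" by (rule gamma_eq_imp_eq[OF assms])
next
  assume "\<forall>u. (\<forall>i\<in>I. 0 < u i) \<longrightarrow> kappa I E h u = kappa I E' h' u"
  moreover have "finite I" using assms(1) by (simp add: shrub_def)
  ultimately have "gamma I E h = gamma I E' h'"
    unfolding kappa_def by (intro iota_eq_imp_eq) (auto simp: gamma_apply)
  then show "E = E' \<and> (\<forall>i\<in>I. h i = h' i)" by (rule gamma_eq_imp_eq[OF assms])
qed

end
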